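(* Let $P$ be a program, $s$ a state and $\varphi$ a valuation formula. If $\langle P,s\rangle\models\Box\varphi$, then there exists $\mathbf z\in\mathbb N_+$ such that for every scheduler $\mathcal S$ that is non-blocking w.r.t. $\langle P,s\rangle$ we have $\langle P,s\rangle\Downarrow^{\mathcal S,\mathbf z}\mu$ for some valuation $\mu$ with $\mu\in\varphi$.
   Context: Fix a set $S$ of states (a discrete space). $\mathcal V_{=1,\omega}(X)$ (resp. $\mathcal V_{\le1,\omega}(X)$) is the set of finitely supported probability (resp. subprobability) distributions on $X$, written $\sum_i p_i\cdot x_i$, $\bot$ the zero distribution, ordered/added/scaled pointwise. Programs: $P::=\mathtt{skip}\mid\mathtt a\mid P;P\mid P\parallel P\mid P+_{\mathtt p}P\mid P+P\mid\mathtt{if}\ \mathtt b\ \mathtt{then}\ P\ \mathtt{else}\ P\mid\mathtt{while}\ \mathtt b\ P$, where atomic programs have given interpretations $[\![\mathtt a]\!]:S\to\mathcal V_{=1,\omega}(S)$ and conditions $[\![\mathtt b]\!]:S\to\{\mathtt{tt},\mathtt{ff}\}$. Small-step relation $\longrightarrow\subseteq(\mathrm{Pr}\times S)\times\mathcal V_{=1,\omega}(S+\mathrm{Pr}\times S)$: least relation with $\langle\mathtt a,s\rangle\to[\![\mathtt a]\!](s)$; $\langle\mathtt{skip},s\rangle\to1\cdot s$; if $\langle P,s\rangle\to\sum_ip_i\langle P_i,s_i\rangle+\sum_jp_j s_j$ then $\langle P;Q,s\rangle\to\sum_ip_i\langle P_i;Q,s_i\rangle+\sum_jp_j\langle Q,s_j\rangle$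 and $\langle P\parallel Q,s\rangle\to\sum_ip_i\langle P_i\parallel Q,s_i\rangle+\sum_jp_j\langle Q,s_j\rangle$; symmetrically if $\langle Q,s\rangle\to\sum_ip_i\langle Q_i,s_i\rangle+\sum_jp_js_j$ then $\langle P\parallel Q,s\rangle\to\sum_ip_i\langle P\parallel Q_i,s_i\rangle+\sum_jp_j\langle P,s_j\rangle$; $\langle P+_{\mathtt p}Q,s\rangle\to\mathtt p\mu+(1-\mathtt p)\nu$ if $\langle P,s\rangle\to\mu$, $\langle Q,s\rangle\to\nu$; $\langle P+Q,s\rangle\to\mu$ if $\langle P,s\rangle\to\mu$ or $\langle Q,s\rangle\to\mu$; conditionals go with probability 1 to $\langle P,s\rangle$ or $\langle Q,s\rangle$ according to $[\![\mathtt b]\!](s)$; $\langle\mathtt{while}\ \mathtt b\ P,s\rangle\to1\cdot\langle P;\mathtt{while}\ \mathtt b\ P,s\rangle$ if $[\![\mathtt b]\!](s)=\mathtt{tt}$, else $\to1\cdot s$. $\langle P,s\rangle\!\longrightarrow=\{\mu\mid\langle P,s\rangle\to\mu\}$. With $I=((\mathrm{Pr}\times S)\times\mathcal V_{=1,\omega}(S+\mathrm{Pr}\times S))^*\times(\mathrm{Pr}\times S)$ (elements $h\langle P,s\rangle$, $h$ a history), a scheduler is a partial map $\mathcal S:I\rightharpoonup\mathcal V_{=1,\omega}(S+\mathrm{Pr}\times S)$ whose value at $h\langle P,s\rangle$, when defined, is a finite convex combination of elements of $\langle P,s\rangle\!\longrightarrow$. Big-step: $h\langle P,s\rangle\Downarrow^{\mathcal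 S,0}\bot$; $h\langle P,s\rangle\Downarrow^{\mathcal S,n+1}\sum_kp_k(\sum_ip_{k,i}\mu_{k,i}+\sum_jp_{k,j}s_{k,j})$ whenever $\mathcal S(h\langle P,s\rangle)=\sum_kp_k\nu_k$, $\nu_k=\sum_ip_{k,i}\langle P_{k,i},s_{k,i}\rangle+\sum_jp_{k,j}s_{k,j}$, and $h\langle P,s\rangle\nu_k\langle P_{k,i},s_{k,i}\rangle\Downarrow^{\mathcal S,n}\mu_{k,i}$ for all $k,i$ (empty history omitted). $\mathcal S$ is non-blocking w.r.t. $\langle P,s\rangle$ if for every $n\in\mathbb N$ there is $\mu$ with $\langle P,s\rangle\Downarrow^{\mathcal S,n}\mu$. $\mathcal V(S)$ is the set of continuous valuations on discrete $S$ (i.e. $[0,\infty]$-valued measures on all subsets), ordered pointwise, with its Scott topology. Valuation formulas $\varphi::=\mathbb P_{>p}U\mid\varphi\wedge\varphi\mid\bigvee_{j\in J}\varphi_j\mid\bot\mid\top$ ($U\subseteq S$, $p\in\mathbb R_{\ge0}$, $J$ any index set) denote Scott-open subsets of $\mathcal V(S)$: $\mathbb P_{>p}U=\{\mu\mid\mu(U)>p\}$, $\wedge$ is intersection, $\bigvee$ union, $\bot=\emptyset$, $\top=\mathcal V(S)$. $\langle P,s\rangle\models\Box\varphi$ iff for every scheduler $\mathcal S$ non-blocking w.r.t. $\langle P,s\rangle$ there exist $n\in\mathbb N$ and $\mu$ with $\langle P,s\rangle\Downarrow^{\mathcal S,n}\mu$ and $\mu\in\varphi$. *)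

theory Defs
  imports Complex_Main "HOL-Library.Extended_Nonnegative_Real"
begin

text \<open>A finitely supported distribution on X is represented by its weight function X => real.\<close>

type_synonym 'x dist = "'x \<Rightarrow> real"

definition supp :: "'x dist \<Rightarrow> 'x set" where
  "supp \<mu> = {x. \<mu> x \<noteq> 0}"

definition is_pdist :: "'x dist \<Rightarrow> bool" where
  "is_pdist \<mu> \<longleftrightarrow> (\<forall>x. 0 \<le> \<mu> x) \<and> finite (supp \<mu>) \<and> sum \<mu> (supp \<mu>) = 1"

definition dpoint :: "'x \<Rightarrow> 'x dist" where
  "dpoint x = (\<lambda>y. if y = x then 1 else 0)"

definition dmap :: "('x \<Rightarrow> 'y) \<Rightarrow> 'x dist \<Rightarrow> 'y dist" where
  "dmap f \<mu> = (\<lambda>y. sum \<mu> {x \<in> supp \<mu>. f x = y})"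

datatype ('a, 'b) prog =
    Skip
  | Atom 'a
  | Seq "('a, 'b) prog" "('a, 'b) prog"
  | Par "('a, 'b) prog" "('a, 'b) prog"
  | PChoice real "('a, 'b) prog" "('a, 'b) prog"
  | NChoice "('a, 'b) prog" "('a, 'b) prog"
  | If 'b "('a, 'b) prog" "('a, 'b) prog"
  | While 'b "('a, 'b) prog"

fun wf_prog :: "('a, 'b) prog \<Rightarrow> bool" where
  "wf_prog Skip = True"
| "wf_prog (Atom a) = True"
| "wf_prog (Seq P Q) = (wf_prog P \<and> wf_prog Q)"
| "wf_prog (Par P Q) = (wf_prog P \<and> wf_prog Q)"
| "wf_prog (PChoice p P Q) = (0 \<le> p \<and> p \<le> 1 \<and> wf_prog P \<and> wf_prog Q)"
| "wf_prog (NChoice P Q) = (wf_prog P \<and> wf_prog Q)"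
| "wf_prog (If b P Q) = (wf_prog P \<and> wf_prog Q)"
| "wf_prog (While b P) = wf_prog P"

type_synonym ('a, 'b, 's) conf = "('a, 'b) prog \<times> 's"
type_synonym ('a, 'b, 's) out = "('s + ('a, 'b, 's) conf) dist"

text \<open>A: interpretation of atomic programs, B: interpretation of conditions.\<close>

inductive step :: "('a \<Rightarrow> 's \<Rightarrow> 's dist) \<Rightarrow> ('b \<Rightarrow> 's \<Rightarrow> bool)
                   \<Rightarrow> ('a, 'b, 's) conf \<Rightarrow> ('a, 'b, 's) out \<Rightarrow> bool"
  for A :: "'a \<Rightarrow> 's \<Rightarrow> 's dist" and B :: "'b \<Rightarrow> 's \<Rightarrow> bool" where
  atom: "step A B (Atom a, s) (dmap Inl (A a s))"
| skip: "step A B (Skip, s) (dpoint (Inl s))"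
| seq: "step A B (P, s) \<mu> \<Longrightarrow>
     step A B (Seq P Q, s)
       (dmap (case_sum (\<lambda>s'. Inr (Q, s')) (\<lambda>(P', s'). Inr (Seq P' Q, s'))) \<mu>)"
| par_l: "step A B (P, s) \<mu> \<Longrightarrow>
     step A B (Par P Q, s)
       (dmap (case_sum (\<lambda>s'. Inr (Q, s')) (\<lambda>(P', s'). Inr (Par P' Q, s'))) \<mu>)"
| par_r: "step A B (Q, s) \<mu> \<Longrightarrow>
     step A B (Par P Q, s)
       (dmap (case_sum (\<lambda>s'. Inr (P, s')) (\<lambda>(Q', s'). Inr (Par P Q', s'))) \<mu>)"
| pchoice: "step A B (P, s) \<mu> \<Longrightarrow> step A B (Q, s) \<nu> \<Longrightarrow>
     step A B (PChoice p P Q, s) (\<lambda>x. p * \<mu> x + (1 - p) * \<nu> x)"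
| nchoice_l: "step A B (P, s) \<mu> \<Longrightarrow> step A B (NChoice P Q, s) \<mu>"
| nchoice_r: "step A B (Q, s) \<mu> \<Longrightarrow> step A B (NChoice P Q, s) \<mu>"
| if_tt: "B b s \<Longrightarrow> step A B (If b P Q, s) (dpoint (Inr (P, s)))"
| if_ff: "\<not> B b s \<Longrightarrow> step A B (If b P Q, s) (dpoint (Inr (Q, s)))"
| while_tt: "B b s \<Longrightarrow> step A B (While b P, s) (dpoint (Inr (Seq P (While b P), s)))"
| while_ff: "\<not> B b s \<Longrightarrow> step A B (While b P, s) (dpoint (Inl s))"

text \<open>An element h<P,s> of I is a pair (h, (P,s)) with h a list of (configuration, chosen step).\<close>
type_synonym ('a, 'b, 's) hist = "(('a, 'b, 's) conf \<times> ('a, 'b, 's) out) list"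
type_synonym ('a, 'b, 's) sched = "('a, 'b, 's) hist \<times> ('a, 'b, 's) conf \<Rightarrow> ('a, 'b, 's) out option"

definition convex_decomp ::
  "('a \<Rightarrow> 's \<Rightarrow> 's dist) \<Rightarrow> ('b \<Rightarrow> 's \<Rightarrow> bool) \<Rightarrow> ('a, 'b, 's) conf \<Rightarrow> ('a, 'b, 's) out
   \<Rightarrow> nat \<Rightarrow> (nat \<Rightarrow> real) \<Rightarrow> (nat \<Rightarrow> ('a, 'b, 's) out) \<Rightarrow> bool" where
  "convex_decomp A B c v K w \<nu> \<longleftrightarrow>
     (\<forall>k<K. 0 \<le> w k \<and> step A B c (\<nu> k)) \<and> (\<Sum>k<K. w k) = 1 \<and>
     v = (\<lambda>x. \<Sum>k<K. w k * \<nu> k x)"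

definition is_scheduler ::
  "('a \<Rightarrow> 's \<Rightarrow> 's dist) \<Rightarrow> ('b \<Rightarrow> 's \<Rightarrow> bool) \<Rightarrow> ('a, 'b, 's) sched \<Rightarrow> bool" where
  "is_scheduler A B Sc \<longleftrightarrow>
     (\<forall>h c v. Sc (h, c) = Some v \<longrightarrow> (\<exists>K w \<nu>. convex_decomp A B c v K w \<nu>))"

text \<open>bigstep A B Sc n h c mu  means  h<P,s> \<Down>^{Sc,n} mu  (with c = (P,s)).
  The results are finitely supported subprobability distributions on states (weight functions).\<close>
inductive bigstep ::
  "('a \<Rightarrow> 's \<Rightarrow> 's dist) \<Rightarrow> ('b \<Rightarrow> 's \<Rightarrow> bool) \<Rightarrow> ('a, 'b, 's) sched
   \<Rightarrow> nat \<Rightarrow> ('a, 'b, 's) hist \<Rightarrow> ('a, 'b, 's) conf \<Rightarrow> 's dist \<Rightarrow> bool"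
  for A B Sc where
  zero: "bigstep A B Sc 0 h c (\<lambda>_. 0)"
| succ: "\<lbrakk> Sc (h, c) = Some v; convex_decomp A B c v K w \<nu>;
           \<forall>k<K. \<forall>c'. \<nu> k (Inr c') \<noteq> 0 \<longrightarrow> bigstep A B Sc n (h @ [(c, \<nu> k)]) c' (m k c') \<rbrakk>
         \<Longrightarrow> bigstep A B Sc (Suc n) h c
               (\<lambda>t. \<Sum>k<K. w k * ((\<Sum>c'\<in>{c'. \<nu> k (Inr c') \<noteq> 0}. \<nu> k (Inr c') * m k c' t)
                                    + \<nu> k (Inl t)))"

definition non_blocking ::
  "('a \<Rightarrow> 's \<Rightarrow> 's dist) \<Rightarrow> ('b \<Rightarrow> 's \<Rightarrow> bool) \<Rightarrow> ('a, 'b, 's) sched \<Rightarrow> ('a, 'b, 's) conf \<Rightarrow> bool" where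
  "non_blocking A B Sc c \<longleftrightarrow> (\<forall>n. \<exists>\<mu>. bigstep A B Sc n [] c \<mu>)"

text \<open>Valuations on the discrete space S: maps 's set => ennreal.
  A finitely supported subdistribution mu is viewed as the valuation U |-> sum of mu over U.\<close>
definition val_of :: "'s dist \<Rightarrow> ('s set \<Rightarrow> ennreal)" where
  "val_of \<mu> = (\<lambda>U. ennreal (sum \<mu> (U \<inter> supp \<mu>)))"

text \<open>The subsets of V(S) denoted by valuation formulas
  phi ::= P_{>p} U | phi /\ phi | \/_{j in J} phi_j | bot | top
  (an arbitrary disjunction over an index set J is the union of a family of denotations).\<close>
inductive vformula_den :: "('s set \<Rightarrow> ennreal) set \<Rightarrow> bool" where
  prob: "0 \<le> p \<Longrightarrow> vformula_den {\<nu>. \<nu> U > ennreal p}"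
| conj: "vformula_den X \<Longrightarrow> vformula_den Y \<Longrightarrow> vformula_den (X \<inter> Y)"
| disj: "(\<forall>X\<in>F. vformula_den X) \<Longrightarrow> vformula_den (\<Union>F)"
| bot: "vformula_den {}"
| top: "vformula_den UNIV"

definition models_box ::
  "('a \<Rightarrow> 's \<Rightarrow> 's dist) \<Rightarrow> ('b \<Rightarrow> 's \<Rightarrow> bool) \<Rightarrow> ('a, 'b, 's) conf
   \<Rightarrow> ('s set \<Rightarrow> ennreal) set \<Rightarrow> bool" where
  "models_box A B c \<phi> \<longleftrightarrow>
     (\<forall>Sc. is_scheduler A B Sc \<and> non_blocking A B Sc c \<longrightarrow>
        (\<exists>n \<mu>. bigstep A B Sc n [] c \<mu> \<and> val_of \<mu> \<in> \<phi>))"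

end

theory Submission
  imports Defs "HOL-Analysis.Analysis"
begin

text \<open>A scheduler that remembers only the configurations visited so far and randomises over the
  finitely many steps available to the current one is described by a table W of weights; these
  tables form a compact space (Tychonoff), the outcome after n steps depends continuously on W,
  and it increases with n. Every outcome of an arbitrary scheduler is the outcome of some table,
  because the outcomes realisable from a fixed history are closed under convex combinations.
  A valuation formula denotes a set that is upward closed and, on outcomes of bounded support,
  open. Hence if \<open>\<langle>P,s\<rangle> \<Turnstile> \<box>\<phi>\<close>, the sets of tables whose n-step outcome satisfies
  \<open>\<phi>\<close> form an increasing open cover of the compact space of tables, so a single n works for
  all tables and therefore for all schedulers.\<close>

lemma supp_dmap_subset: "supp (dmap f \<mu>) \<subseteq> f ` supp \<mu>"
proof
  fix y assume "y \<in> supp (dmap f \<mu>)"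
  then have "sum \<mu> {x \<in> supp \<mu>. f x = y} \<noteq> 0" by (simp add: supp_def dmap_def)
  then have "{x \<in> supp \<mu>. f x = y} \<noteq> {}" by (metis sum.empty)
  then show "y \<in> f ` supp \<mu>" by blast
qed

lemma finite_supp_dmap: "finite (supp \<mu>) \<Longrightarrow> finite (supp (dmap f \<mu>))"
  by (rule finite_subset[OF supp_dmap_subset]) simp

lemma dmap_nonzero_imp: assumes "dmap f \<mu> y \<noteq> 0" shows "\<exists>x. \<mu> x \<noteq> 0 \<and> f x = y"
proof -
  have "y \<in> f ` supp \<mu>" using assms supp_dmap_subset[of f \<mu>] by (auto simp: supp_def)
  then show ?thesis by (auto simp: supp_def)
qed

lemma finite_supp_dpoint: "finite (supp (dpoint x))"
  by (rule finite_subset[of _ "{x}"]) (auto simp: supp_def dpoint_def)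

definition wf_conf :: "('a, 'b, 's) conf \<Rightarrow> bool" where
  "wf_conf c \<longleftrightarrow> wf_prog (fst c)"

definition wf_out :: "('a, 'b, 's) out \<Rightarrow> bool" where
  "wf_out \<mu> \<longleftrightarrow> (\<forall>x. 0 \<le> \<mu> x) \<and> (\<forall>c'. \<mu> (Inr c') \<noteq> 0 \<longrightarrow> wf_conf c')"

lemma wf_out_dpoint_Inl: "wf_out (dpoint (Inl s))"
  by (simp add: wf_out_def dpoint_def)

lemma wf_out_dpoint_Inr: "wf_conf c \<Longrightarrow> wf_out (dpoint (Inr c))"
  by (simp add: wf_out_def dpoint_def)

lemma wf_out_successor: "wf_out \<mu> \<Longrightarrow> \<mu> (Inr c') \<noteq> 0 \<Longrightarrow> wf_conf c'"
  unfolding wf_out_def by blast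

lemma dmap_nonneg: "(\<forall>x. 0 \<le> \<mu> x) \<Longrightarrow> 0 \<le> dmap f \<mu> y"
  unfolding dmap_def by (simp add: sum_nonneg)

lemma wf_out_dmap:
  assumes "\<forall>x. 0 \<le> \<mu> x" "\<And>x c'. \<mu> x \<noteq> 0 \<Longrightarrow> g x = Inr c' \<Longrightarrow> wf_conf c'"
  shows "wf_out (dmap g \<mu>)"
  unfolding wf_out_def
proof (intro conjI allI impI)
  fix y show "0 \<le> dmap g \<mu> y" using assms(1) by (rule dmap_nonneg)
next
  fix c' assume "dmap g \<mu> (Inr c') \<noteq> 0"
  from dmap_nonzero_imp[OF this] show "wf_conf c'" using assms(2) by blast
qed

lemma wf_conf_continue:
  assumes "case_sum (\<lambda>s'. Inr (Q, s')) (\<lambda>(P', s'). Inr (f P', s')) x = Inr c'" "\<mu> x \<noteq> 0"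
    and "wf_out \<mu>" "wf_prog Q" "\<And>P'. wf_prog P' \<Longrightarrow> wf_prog (f P')"
  shows "wf_conf c'"
proof (cases x)
  case (Inl s')
  then show ?thesis using assms(1,4) by (auto simp: wf_conf_def)
next
  case (Inr d)
  obtain P' s' where d: "d = (P', s')" by (cases d)
  then have "wf_conf (P', s')" using assms(2,3) Inr unfolding wf_out_def by blast
  then show ?thesis using assms(1,5) Inr d by (auto simp: wf_conf_def)
qed

lemma vformula_den_mono:
  assumes "vformula_den X" "\<forall>t. 0 \<le> \<mu> t" "\<forall>t. \<mu> t \<le> \<mu>' t" "finite (supp \<mu>')"
  shows "val_of \<mu> \<in> X \<Longrightarrow> val_of \<mu>' \<in> X"
  using assms(1)
proof induction
  case (prob p U)
  have supp: "supp \<mu> \<subseteq> supp \<mu>'"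
    using assms(2,3) by (auto simp: supp_def) (metis order_antisym)
  have "sum \<mu> (U \<inter> supp \<mu>) \<le> sum \<mu>' (U \<inter> supp \<mu>)" using assms(3) by (simp add: sum_mono)
  also have "\<dots> \<le> sum \<mu>' (U \<inter> supp \<mu>')"
    using supp assms(2,3,4) by (intro sum_mono2) (auto intro: order_trans)
  finally have "ennreal (sum \<mu> (U \<inter> supp \<mu>)) \<le> ennreal (sum \<mu>' (U \<inter> supp \<mu>'))" by (rule ennreal_leI)
  then show ?case using prob.prems unfolding val_of_def by (auto intro: order_less_le_trans)
qed auto

lemma open_vformula_den_preimage:
  fixes F :: "'w::topological_space \<Rightarrow> 's \<Rightarrow> real"
  assumes "vformula_den X" "finite R" "\<And>W t. t \<notin> R \<Longrightarrow> F W t = 0"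
    and "\<And>t. continuous_on UNIV (\<lambda>W. F W t)"
  shows "open {W. val_of (F W) \<in> X}"
  using assms(1)
proof induction
  case (prob p U)
  have "sum (F W) (U \<inter> supp (F W)) = (\<Sum>t\<in>U \<inter> R. F W t)" for W
    using assms(2,3) by (intro sum.mono_neutral_left) (auto simp: supp_def)
  then have "{W. val_of (F W) \<in> {\<nu>. ennreal p < \<nu> U}} = {W. p < (\<Sum>t\<in>U \<inter> R. F W t)}"
    using prob.hyps by (simp add: val_of_def ennreal_less_iff)
  moreover have "open {W. p < (\<Sum>t\<in>U \<inter> R. F W t)}"
    by (intro open_Collect_less continuous_intros assms(4))
  ultimately show ?case by simp
next
  case (conj X Y)
  have "{W. val_of (F W) \<in> X \<inter> Y} = {W. val_of (F W) \<in> X} \<inter> {W. val_of (F W) \<in> Y}" by blast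
  then show ?case using conj.IH by (simp add: open_Int)
next
  case (disj FF)
  have "{W. val_of (F W) \<in> \<Union>FF} = (\<Union>X\<in>FF. {W. val_of (F W) \<in> X})" by blast
  then show ?case using disj.IH by (auto intro!: open_UN)
qed simp_all

lemma compact_increasing_cover:
  fixes U :: "nat \<Rightarrow> 'a::topological_space set"
  assumes "compact K" "\<And>n. open (U n)" "K \<subseteq> (\<Union>n. U n)"
    and "\<And>x n m. x \<in> K \<Longrightarrow> n \<le> m \<Longrightarrow> x \<in> U n \<Longrightarrow> x \<in> U m"
  shows "\<exists>z. \<forall>m\<ge>z. K \<subseteq> U m"
proof -
  obtain N where N: "finite N" "K \<subseteq> (\<Union>n\<in>N. U n)"
    by (rule compactE_image[OF assms(1,2,3)]) simp
  have "K \<subseteq> U m" if "Max (insert 0 N) \<le> m" for m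
  proof
    fix x assume "x \<in> K"
    then obtain n where "n \<in> N" "x \<in> U n" using N(2) by blast
    moreover have "n \<le> Max (insert 0 N)" using \<open>n \<in> N\<close> N(1) by simp
    then have "n \<le> m" using that by linarith
    ultimately show "x \<in> U m" using assms(4) \<open>x \<in> K\<close> by blast
  qed
  then show ?thesis by blast
qed

lemma compact_unit_box: "compact {W :: 'i \<Rightarrow> real. \<forall>i. W i \<in> {0..1}}"
proof -
  have "compactin (product_topology (\<lambda>_. euclidean) UNIV) (PiE UNIV (\<lambda>_ :: 'i. {0..1 :: real}))"
    by (simp add: compactin_PiE)
  moreover have "PiE UNIV (\<lambda>_ :: 'i. {0..1 :: real}) = {W. \<forall>i. W i \<in> {0..1}}"
    by (auto simp: PiE_UNIV_domain)
  ultimately show ?thesis by (simp add: euclidean_product_topology)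
qed

inductive_cases step_SkipE: "step A B (Skip, s) \<mu>"
inductive_cases step_AtomE: "step A B (Atom a, s) \<mu>"
inductive_cases step_SeqE: "step A B (Seq P Q, s) \<mu>"
inductive_cases step_ParE: "step A B (Par P Q, s) \<mu>"
inductive_cases step_PChoiceE: "step A B (PChoice p P Q, s) \<mu>"
inductive_cases step_NChoiceE: "step A B (NChoice P Q, s) \<mu>"
inductive_cases step_IfE: "step A B (If b P Q, s) \<mu>"
inductive_cases step_WhileE: "step A B (While b P, s) \<mu>"

lemma step_exists: "\<exists>\<mu>. step A B (P, s) \<mu>"
proof (induction P arbitrary: s)
  case (If b P Q) then show ?case by (cases "B b s") (auto intro: step.intros)
next
  case (While b P) then show ?case by (cases "B b s") (auto intro: step.intros)
next
  case (Seq P Q) then show ?case by (meson step.seq)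
next
  case (Par P Q) then show ?case by (meson step.par_l)
next
  case (PChoice p P Q) then show ?case by (meson step.pchoice)
next
  case (NChoice P Q) then show ?case by (meson step.nchoice_l)
qed (auto intro: step.intros)

text \<open>\<open>W (q, l)\<close> is the probability of taking step \<open>l\<close> when the configurations visited so far
  are \<open>q\<close>, most recent first; \<open>hd q\<close> is the current configuration.\<close>

type_synonym ('a, 'b, 's) weights = "('a, 'b, 's) conf list \<times> ('a, 'b, 's) out \<Rightarrow> real"

locale prob_atoms =
  fixes A :: "'a \<Rightarrow> 's \<Rightarrow> 's dist" and B :: "'b \<Rightarrow> 's \<Rightarrow> bool"
  assumes atoms_pdist: "\<forall>a t. is_pdist (A a t)"
begin

definition steps :: "('a, 'b, 's) conf \<Rightarrow> ('a, 'b, 's) out set" where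
  "steps c = {\<mu>. step A B c \<mu>}"

lemma steps_nonempty: "steps c \<noteq> {}"
  using step_exists[of A B "fst c" "snd c"] by (auto simp: steps_def)

lemma steps_PChoice_subset:
  "steps (PChoice p P Q, s) \<subseteq> (\<lambda>(\<mu>, \<nu>) x. p * \<mu> x + (1 - p) * \<nu> x) ` (steps (P, s) \<times> steps (Q, s))"
proof
  fix x assume "x \<in> steps (PChoice p P Q, s)"
  then obtain \<mu> \<nu> where "step A B (P, s) \<mu>" "step A B (Q, s) \<nu>" "x = (\<lambda>y. p * \<mu> y + (1 - p) * \<nu> y)"
    unfolding steps_def by (auto elim: step_PChoiceE)
  then show "x \<in> (\<lambda>(\<mu>, \<nu>) x. p * \<mu> x + (1 - p) * \<nu> x) ` (steps (P, s) \<times> steps (Q, s))"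
    by (force simp: steps_def)
qed

lemma finite_steps: "finite (steps c)"
proof -
  have "finite (steps (P, s))" for P s
  proof (induction P arbitrary: s)
    case (Seq P Q)
    have "steps (Seq P Q, s) \<subseteq>
        dmap (case_sum (\<lambda>s'. Inr (Q, s')) (\<lambda>(P', s'). Inr (Seq P' Q, s'))) ` steps (P, s)"
      by (auto simp: steps_def elim!: step_SeqE)
    then show ?case using finite_subset Seq by blast
  next
    case (Par P Q)
    have "steps (Par P Q, s) \<subseteq>
        dmap (case_sum (\<lambda>s'. Inr (Q, s')) (\<lambda>(P', s'). Inr (Par P' Q, s'))) ` steps (P, s)
      \<union> dmap (case_sum (\<lambda>s'. Inr (P, s')) (\<lambda>(Q', s'). Inr (Par P Q', s'))) ` steps (Q, s)"
      by (auto simp: steps_def elim!: step_ParE)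
    then show ?case using finite_subset Par by blast
  next
    case (PChoice p P Q)
    have "steps (PChoice p P Q, s) \<subseteq>
        (\<lambda>(\<mu>, \<nu>) x. p * \<mu> x + (1 - p) * \<nu> x) ` (steps (P, s) \<times> steps (Q, s))"
      by (rule steps_PChoice_subset)
    then show ?case using finite_subset PChoice by blast
  next
    case (NChoice P Q)
    have "steps (NChoice P Q, s) \<subseteq> steps (P, s) \<union> steps (Q, s)"
      by (auto simp: steps_def elim!: step_NChoiceE)
    then show ?case using finite_subset NChoice by blast
  next
    case (If b P Q)
    have "steps (If b P Q, s) \<subseteq> {dpoint (Inr (P, s)), dpoint (Inr (Q, s))}"
      by (auto simp: steps_def elim!: step_IfE)
    then show ?case using finite_subset by blast
  next
    case (While b P)
    have "steps (While b P, s) \<subseteq> {dpoint (Inr (Seq P (While b P), s)), dpoint (Inl s)}"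
      by (auto simp: steps_def elim!: step_WhileE)
    then show ?case using finite_subset by blast
  next
    case Skip
    have "steps (Skip, s) \<subseteq> {dpoint (Inl s)}" by (auto simp: steps_def elim: step_SkipE)
    then show ?case using finite_subset by blast
  next
    case (Atom a)
    have "steps (Atom a, s) \<subseteq> {dmap Inl (A a s)}" by (auto simp: steps_def elim: step_AtomE)
    then show ?case using finite_subset by blast
  qed
  then show ?thesis by (cases c) simp
qed

lemma finite_supp_step: "step A B c \<mu> \<Longrightarrow> finite (supp \<mu>)"
proof (induction rule: step.induct)
  case (atom a s)
  have "finite (supp (A a s))" using atoms_pdist unfolding is_pdist_def by blast
  then show ?case by (rule finite_supp_dmap)
next
  case (pchoice P s \<mu> Q \<nu> p)
  have "supp (\<lambda>x. p * \<mu> x + (1 - p) * \<nu> x) \<subseteq> supp \<mu> \<union> supp \<nu>" by (auto simp: supp_def)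
  then show ?case by (rule finite_subset) (simp add: pchoice.IH)
qed (simp_all add: finite_supp_dmap finite_supp_dpoint)

lemma step_wf_out: "step A B c \<mu> \<Longrightarrow> wf_conf c \<Longrightarrow> wf_out \<mu>"
proof (induction rule: step.induct)
  case (atom a s)
  have "\<forall>x. 0 \<le> A a s x" using atoms_pdist unfolding is_pdist_def by blast
  then show ?case by (rule wf_out_dmap) simp
next
  case (seq P s \<mu> Q)
  then have "wf_out \<mu>" "wf_prog Q" by (simp_all add: wf_conf_def)
  then show ?case by (intro wf_out_dmap) (auto simp: wf_out_def elim!: wf_conf_continue)
next
  case (par_l P s \<mu> Q)
  then have "wf_out \<mu>" "wf_prog Q" by (simp_all add: wf_conf_def)
  then show ?case by (intro wf_out_dmap) (auto simp: wf_out_def elim!: wf_conf_continue)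
next
  case (par_r Q s \<mu> P)
  then have "wf_out \<mu>" "wf_prog P" by (simp_all add: wf_conf_def)
  then show ?case by (intro wf_out_dmap) (auto simp: wf_out_def elim!: wf_conf_continue)
next
  case (pchoice P s \<mu> Q \<nu> p)
  then have p: "0 \<le> p" "p \<le> 1" and \<mu>: "wf_out \<mu>" and \<nu>: "wf_out \<nu>"
    by (simp_all add: wf_conf_def)
  show ?case unfolding wf_out_def
  proof (intro conjI allI impI)
    fix x show "0 \<le> p * \<mu> x + (1 - p) * \<nu> x"
      by (intro add_nonneg_nonneg mult_nonneg_nonneg) (use p \<mu> \<nu> in \<open>auto simp: wf_out_def\<close>)
  next
    fix c' assume "p * \<mu> (Inr c') + (1 - p) * \<nu> (Inr c') \<noteq> 0"
    then have "\<mu> (Inr c') \<noteq> 0 \<or> \<nu> (Inr c') \<noteq> 0" by auto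
    then show "wf_conf c'" using \<mu> \<nu> unfolding wf_out_def by blast
  qed
qed (simp_all add: wf_conf_def wf_out_dpoint_Inl wf_out_dpoint_Inr)

definition successors :: "('a, 'b, 's) conf \<Rightarrow> ('a, 'b, 's) conf set" where
  "successors c = (\<Union>l\<in>steps c. {c'. l (Inr c') \<noteq> 0})"

lemma finite_successors: "finite (successors c)"
  unfolding successors_def
proof (rule finite_UN_I)
  show "finite (steps c)" by (rule finite_steps)
  fix l assume "l \<in> steps c"
  then have "finite (supp l)" by (simp add: steps_def finite_supp_step)
  moreover have "{c'. l (Inr c') \<noteq> 0} = Inr -` supp l" by (auto simp: supp_def)
  ultimately show "finite {c'. l (Inr c') \<noteq> 0}" by (simp add: finite_vimageI)
qed

lemma sum_over_successors:
  "l \<in> steps c \<Longrightarrow>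
    (\<Sum>c'\<in>{c'. l (Inr c') \<noteq> 0}. l (Inr c') * g c') = (\<Sum>c'\<in>successors c. l (Inr c') * g c')"
  by (rule sum.mono_neutral_left[OF finite_successors]) (auto simp: successors_def)

definition after_step ::
  "('a, 'b, 's) conf \<Rightarrow> ('a, 'b, 's) out \<Rightarrow> (('a, 'b, 's) conf \<Rightarrow> 's \<Rightarrow> real) \<Rightarrow> 's \<Rightarrow> real" where
  "after_step c l f t = l (Inl t) + (\<Sum>c'\<in>successors c. l (Inr c') * f c' t)"

lemma after_step_combine:
  assumes "finite I" "\<And>x. V x = (\<Sum>i\<in>I. a i * U i x)"
    and "\<And>c'. c' \<in> successors c \<Longrightarrow> V (Inr c') * F c' t = (\<Sum>i\<in>I. a i * U i (Inr c') * Fi i c' t)"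
  shows "after_step c V F t = (\<Sum>i\<in>I. a i * after_step c (U i) (Fi i) t)"
proof -
  have "(\<Sum>i\<in>I. a i * after_step c (U i) (Fi i) t)
      = (\<Sum>i\<in>I. a i * U i (Inl t)) + (\<Sum>i\<in>I. \<Sum>c'\<in>successors c. a i * U i (Inr c') * Fi i c' t)"
    by (simp add: after_step_def distrib_left sum.distrib sum_distrib_left mult.assoc)
  also have "(\<Sum>i\<in>I. \<Sum>c'\<in>successors c. a i * U i (Inr c') * Fi i c' t)
      = (\<Sum>c'\<in>successors c. \<Sum>i\<in>I. a i * U i (Inr c') * Fi i c' t)"
    by (rule sum.swap)
  also have "\<dots> = (\<Sum>c'\<in>successors c. V (Inr c') * F c' t)"
    using assms(3) by simp
  finally show ?thesis by (simp add: after_step_def assms(2))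
qed

lemma after_step_linear:
  "finite I \<Longrightarrow>
    after_step c (\<lambda>x. \<Sum>i\<in>I. a i * l i x) f t = (\<Sum>i\<in>I. a i * after_step c (l i) f t)"
  by (rule after_step_combine) (simp_all add: sum_distrib_right)

lemma after_step_nonneg:
  assumes "\<forall>x. 0 \<le> l x" "\<And>c'. l (Inr c') \<noteq> 0 \<Longrightarrow> 0 \<le> f c' t"
  shows "0 \<le> after_step c l f t"
  unfolding after_step_def
proof (intro add_nonneg_nonneg sum_nonneg)
  fix c' show "0 \<le> l (Inr c') * f c' t"
    using assms by (cases "l (Inr c') = 0") simp_all
qed (use assms in simp)

lemma after_step_mono:
  assumes "\<forall>x. 0 \<le> l x" "\<And>c'. l (Inr c') \<noteq> 0 \<Longrightarrow> f c' t \<le> g c' t"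
  shows "after_step c l f t \<le> after_step c l g t"
  unfolding after_step_def
proof (intro add_left_mono sum_mono)
  fix c' show "l (Inr c') * f c' t \<le> l (Inr c') * g c' t"
    using assms by (cases "l (Inr c') = 0") (simp_all add: mult_left_mono)
qed

lemma after_step_eq_support_sum:
  assumes "l \<in> steps c" "\<And>c'. l (Inr c') \<noteq> 0 \<Longrightarrow> m c' t = f c' t"
  shows "(\<Sum>c'\<in>{c'. l (Inr c') \<noteq> 0}. l (Inr c') * m c' t) + l (Inl t) = after_step c l f t"
proof -
  have "(\<Sum>c'\<in>{c'. l (Inr c') \<noteq> 0}. l (Inr c') * m c' t) = (\<Sum>c'\<in>{c'. l (Inr c') \<noteq> 0}. l (Inr c') * f c' t)"
    using assms(2) by (intro sum.cong) auto
  also have "\<dots> = (\<Sum>c'\<in>successors c. l (Inr c') * f c' t)"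
    by (rule sum_over_successors[OF assms(1)])
  finally show ?thesis by (simp add: after_step_def)
qed

definition mix :: "('a, 'b, 's) conf \<Rightarrow> (('a, 'b, 's) out \<Rightarrow> real) \<Rightarrow> ('a, 'b, 's) out" where
  "mix c r x = (\<Sum>l\<in>steps c. r l * l x)"

lemma mix_nonzero_imp: "mix c r x \<noteq> 0 \<Longrightarrow> \<exists>l\<in>steps c. l x \<noteq> 0"
  using sum.neutral[of "steps c" "\<lambda>l. r l * l x"] by (auto simp: mix_def)

lemma wf_out_mix:
  assumes "wf_conf c" "\<forall>l. 0 \<le> r l"
  shows "wf_out (mix c r)"
  unfolding wf_out_def
proof (intro conjI allI impI)
  have "wf_out l" if "l \<in> steps c" for l
    using step_wf_out that assms(1) by (simp add: steps_def)
  then show "0 \<le> mix c r x" for x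
    unfolding mix_def using assms(2) by (intro sum_nonneg mult_nonneg_nonneg) (auto simp: wf_out_def)
  fix c' assume "mix c r (Inr c') \<noteq> 0"
  then obtain l where "l \<in> steps c" "l (Inr c') \<noteq> 0" by (blast dest: mix_nonzero_imp)
  with \<open>\<And>l. l \<in> steps c \<Longrightarrow> wf_out l\<close> show "wf_conf c'" unfolding wf_out_def by blast
qed

definition valid_row :: "('a, 'b, 's) conf \<Rightarrow> (('a, 'b, 's) out \<Rightarrow> real) \<Rightarrow> bool" where
  "valid_row c r \<longleftrightarrow> (\<forall>l. 0 \<le> r l) \<and> (\<forall>l. l \<notin> steps c \<longrightarrow> r l = 0) \<and> sum r (steps c) = 1"

lemma valid_row_point: "l \<in> steps c \<Longrightarrow> valid_row c (\<lambda>l'. if l' = l then 1 else 0)"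
  unfolding valid_row_def using sum.delta[OF finite_steps[of c], of l "\<lambda>_. 1::real"] by auto

lemma mix_point:
  assumes "l \<in> steps c"
  shows "mix c (\<lambda>l'. if l' = l then 1 else 0) = l"
proof
  fix x
  have "mix c (\<lambda>l'. if l' = l then 1 else 0) x = (\<Sum>l'\<in>steps c. if l' = l then l x else 0)"
    unfolding mix_def by (rule sum.cong) auto
  also have "\<dots> = l x" using assms finite_steps by simp
  finally show "mix c (\<lambda>l'. if l' = l then 1 else 0) x = l x" .
qed

definition valid_weights :: "('a, 'b, 's) weights \<Rightarrow> bool" where
  "valid_weights W \<longleftrightarrow> (\<forall>q. valid_row (hd q) (\<lambda>l. W (q, l)))"

lemma ex_valid_weights: "\<exists>W. valid_weights W"
proof
  have "(SOME l. l \<in> steps (hd q)) \<in> steps (hd q)" for q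
    using steps_nonempty by (simp add: some_in_eq)
  then show "valid_weights (\<lambda>(q, l). if l = (SOME l. l \<in> steps (hd q)) then 1 else 0)"
    by (simp add: valid_weights_def valid_row_point)
qed

primrec outcome :: "nat \<Rightarrow> ('a, 'b, 's) weights \<Rightarrow> ('a, 'b, 's) conf list \<Rightarrow> 's \<Rightarrow> real" where
  "outcome 0 W q = (\<lambda>_. 0)"
| "outcome (Suc n) W q = after_step (hd q) (mix (hd q) (\<lambda>l. W (q, l))) (\<lambda>c'. outcome n W (c' # q))"

lemma outcome_cong_suffix:
  "(\<And>zs l. W (zs @ q, l) = W' (zs @ q, l)) \<Longrightarrow> outcome n W q = outcome n W' q"
proof (induction n arbitrary: q)
  case (Suc n)
  have "outcome n W (c' # q) = outcome n W' (c' # q)" for c'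
    using Suc.prems[of "_ @ [c']"] by (intro Suc.IH) simp
  moreover have "W (q, l) = W' (q, l)" for l
    using Suc.prems[of "[]"] by simp
  ultimately show ?case by simp
qed simp

lemma continuous_outcome: "continuous_on UNIV (\<lambda>W. outcome n W q t)"
proof (induction n arbitrary: q)
  case (Suc n)
  have "continuous_on UNIV (\<lambda>W :: ('a, 'b, 's) weights. W (q, l))" for l
    by (rule continuous_on_product_coordinates)
  then show ?case
    unfolding outcome.simps after_step_def mix_def by (intro continuous_intros Suc.IH)
qed simp

lemma valid_weights_row_nonneg: "valid_weights W \<Longrightarrow> \<forall>l. 0 \<le> W (q, l)"
  by (simp add: valid_weights_def valid_row_def)

lemma outcome_nonneg_le_Suc:
  assumes "valid_weights W" "wf_conf (hd q)"
  shows "0 \<le> outcome n W q t \<and> outcome n W q t \<le> outcome (Suc n) W q t"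
  using assms(2)
proof (induction n arbitrary: q)
  case 0
  have "wf_out (mix (hd q) (\<lambda>l. W (q, l)))"
    using 0 valid_weights_row_nonneg[OF assms(1)] by (rule wf_out_mix)
  then show ?case by (auto intro!: after_step_nonneg simp: wf_out_def)
next
  case (Suc n)
  let ?l = "mix (hd q) (\<lambda>l. W (q, l))"
  have l: "wf_out ?l" using Suc.prems valid_weights_row_nonneg[OF assms(1)] by (rule wf_out_mix)
  have IH: "0 \<le> outcome n W (c' # q) t \<and> outcome n W (c' # q) t \<le> outcome (Suc n) W (c' # q) t"
    if "?l (Inr c') \<noteq> 0" for c'
    using Suc.IH[of "c' # q"] l that unfolding wf_out_def by simp
  have "0 \<le> after_step (hd q) ?l (\<lambda>c'. outcome n W (c' # q)) t"
    using l IH unfolding wf_out_def by (intro after_step_nonneg) auto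
  moreover have "after_step (hd q) ?l (\<lambda>c'. outcome n W (c' # q)) t
      \<le> after_step (hd q) ?l (\<lambda>c'. outcome (Suc n) W (c' # q)) t"
    using l IH unfolding wf_out_def by (intro after_step_mono) auto
  ultimately show ?case by (simp only: outcome.simps(2)[of "Suc n"] outcome.simps(2)[of n])
qed

lemma outcome_mono:
  assumes "valid_weights W" "wf_conf (hd q)" "n \<le> m"
  shows "outcome n W q t \<le> outcome m W q t"
  using lift_Suc_mono_le[of "\<lambda>n. outcome n W q t", OF _ assms(3)]
    outcome_nonneg_le_Suc[OF assms(1,2)] by blast

primrec outcome_support :: "nat \<Rightarrow> ('a, 'b, 's) conf list \<Rightarrow> 's set" where
  "outcome_support 0 q = {}"
| "outcome_support (Suc n) q =
    (\<Union>l\<in>steps (hd q). Inl -` supp l) \<union> (\<Union>c'\<in>successors (hd q). outcome_support n (c' # q))"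

lemma finite_outcome_support: "finite (outcome_support n q)"
proof (induction n arbitrary: q)
  case (Suc n)
  have "finite (Inl -` supp l :: 's set)" if "l \<in> steps (hd q)" for l
    using that by (intro finite_vimageI) (simp_all add: steps_def finite_supp_step)
  then show ?case by (auto intro!: finite_UN_I finite_steps finite_successors Suc.IH)
qed simp

lemma outcome_support: "outcome n W q t \<noteq> 0 \<Longrightarrow> t \<in> outcome_support n q"
proof (induction n arbitrary: q)
  case (Suc n)
  show ?case
  proof (rule ccontr)
    assume "t \<notin> outcome_support (Suc n) q"
    then have "\<forall>l\<in>steps (hd q). l (Inl t) = 0" "\<forall>c'\<in>successors (hd q). outcome n W (c' # q) t = 0"
      using Suc.IH by (auto simp: supp_def)
    then have "outcome (Suc n) W q t = 0"
      using mix_nonzero_imp[of "hd q" _ "Inl t"] by (auto simp: after_step_def)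
    then show False using Suc.prems by simp
  qed
qed simp

lemma closed_valid_weights: "closed {W. valid_weights W}"
proof -
  have "{W. valid_weights W} =
      (\<Inter>q. \<Inter>l. {W. 0 \<le> W (q, l)}) \<inter> (\<Inter>q. \<Inter>l\<in>- steps (hd q). {W. W (q, l) = 0})
    \<inter> (\<Inter>q. {W. (\<Sum>l\<in>steps (hd q). W (q, l)) = 1})"
    by (auto simp: valid_weights_def valid_row_def)
  also have "closed \<dots>"
    by (intro closed_Int closed_INT ballI closed_Collect_le closed_Collect_eq continuous_on_const
        continuous_on_sum continuous_on_product_coordinates)
  finally show ?thesis .
qed

lemma valid_weights_le_1: "valid_weights W \<Longrightarrow> W (q, l) \<le> 1"
proof -
  assume "valid_weights W"
  then have row: "valid_row (hd q) (\<lambda>l. W (q, l))" by (simp add: valid_weights_def)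
  show "W (q, l) \<le> 1"
  proof (cases "l \<in> steps (hd q)")
    case True
    then have "W (q, l) \<le> (\<Sum>l\<in>steps (hd q). W (q, l))"
      using row by (intro member_le_sum finite_steps) (auto simp: valid_row_def)
    then show ?thesis using row by (simp add: valid_row_def)
  qed (use row in \<open>simp add: valid_row_def\<close>)
qed

lemma compact_valid_weights: "compact {W. valid_weights W}"
proof -
  have "{W. valid_weights W} = {W. \<forall>i. W i \<in> {0..1}} \<inter> {W. valid_weights W}"
    using valid_weights_row_nonneg valid_weights_le_1 by fastforce
  also have "compact \<dots>"
    using compact_unit_box closed_valid_weights by (rule compact_Int_closed)
  finally show ?thesis .
qed

definition weight_scheduler :: "('a, 'b, 's) weights \<Rightarrow> ('a, 'b, 's) sched" where
  "weight_scheduler W = (\<lambda>(h, c). Some (mix c (\<lambda>l. W (c # rev (map fst h), l))))"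

lemma convex_decomp_mix:
  assumes "valid_row c r"
  shows "\<exists>K w \<nu>. convex_decomp A B c (mix c r) K w \<nu>"
proof -
  obtain e where "bij_betw e {0..<card (steps c)} (steps c)"
    using ex_bij_betw_nat_finite[OF finite_steps] by blast
  then have e: "bij_betw e {..<card (steps c)} (steps c)" by (simp add: atLeast0LessThan)
  have "convex_decomp A B c (mix c r) (card (steps c)) (r \<circ> e) e"
    unfolding convex_decomp_def
  proof (intro conjI allI impI)
    fix k assume "k < card (steps c)"
    then have "e k \<in> steps c" using e by (auto dest: bij_betw_apply)
    then show "step A B c (e k)" by (simp add: steps_def)
    show "0 \<le> (r \<circ> e) k" using assms by (simp add: valid_row_def)
  next
    show "(\<Sum>k<card (steps c). (r \<circ> e) k) = 1"
      using sum.reindex_bij_betw[OF e, of r] assms by (simp add: valid_row_def)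
  next
    show "mix c r = (\<lambda>x. \<Sum>k<card (steps c). (r \<circ> e) k * e k x)"
      using sum.reindex_bij_betw[OF e, of "\<lambda>l. r l * l x" for x] by (simp add: mix_def fun_eq_iff)
  qed
  then show ?thesis by blast
qed

lemma valid_weights_row: "valid_weights W \<Longrightarrow> valid_row c (\<lambda>l. W (c # q, l))"
  unfolding valid_weights_def by (metis list.sel(1))

lemma is_scheduler_weight_scheduler:
  assumes "valid_weights W"
  shows "is_scheduler A B (weight_scheduler W)"
  unfolding is_scheduler_def
proof (intro allI impI)
  fix h c v assume "weight_scheduler W (h, c) = Some v"
  then have "v = mix c (\<lambda>l. W (c # rev (map fst h), l))" by (simp add: weight_scheduler_def)
  then show "\<exists>K w \<nu>. convex_decomp A B c v K w \<nu>"
    using convex_decomp_mix[OF valid_weights_row[OF assms]] by blast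
qed

lemma bigstep_weight_scheduler_eq_outcome:
  "bigstep A B (weight_scheduler W) n h c \<mu> \<Longrightarrow> \<mu> = outcome n W (c # rev (map fst h))"
proof (induction rule: bigstep.induct)
  case (succ h c v K w \<nu> n m)
  define q where "q = c # rev (map fst h)"
  define f where "f = (\<lambda>c'. outcome n W (c' # q))"
  have v: "v = mix c (\<lambda>l. W (q, l))" and \<nu>: "v = (\<lambda>x. \<Sum>k<K. w k * \<nu> k x)"
    and steps: "\<And>k. k < K \<Longrightarrow> \<nu> k \<in> steps c"
    using succ.hyps(1,2) by (auto simp: weight_scheduler_def q_def convex_decomp_def steps_def)
  have "(\<Sum>k<K. w k * ((\<Sum>c'\<in>{c'. \<nu> k (Inr c') \<noteq> 0}. \<nu> k (Inr c') * m k c' t) + \<nu> k (Inl t)))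
      = (\<Sum>k<K. w k * after_step c (\<nu> k) f t)" for t
    using steps succ.IH by (intro sum.cong refl arg_cong2[where f = "(*)"] after_step_eq_support_sum)
      (auto simp: f_def q_def)
  also have "\<dots> t = after_step c v f t" for t
    by (simp add: \<nu> after_step_linear)
  also have "\<dots> t = outcome (Suc n) W q t" for t
    by (simp add: v f_def q_def)
  finally show ?case by (simp add: q_def fun_eq_iff)
qed simp

lemma bigstep_weight_scheduler_exists:
  assumes "valid_weights W"
  shows "\<exists>\<mu>. bigstep A B (weight_scheduler W) n h c \<mu>"
proof (induction n arbitrary: h c)
  case 0 show ?case by (blast intro: bigstep.zero)
next
  case (Suc n)
  let ?v = "mix c (\<lambda>l. W (c # rev (map fst h), l))"
  obtain K w \<nu> where d: "convex_decomp A B c ?v K w \<nu>"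
    using convex_decomp_mix[OF valid_weights_row[OF assms]] by blast
  have "\<forall>kc. \<exists>\<mu>. bigstep A B (weight_scheduler W) n (h @ [(c, \<nu> (fst kc))]) (snd kc) \<mu>"
    using Suc.IH by blast
  from choice[OF this] obtain res
    where res: "\<forall>kc. bigstep A B (weight_scheduler W) n (h @ [(c, \<nu> (fst kc))]) (snd kc) (res kc)" ..
  have "bigstep A B (weight_scheduler W) (Suc n) h c (\<lambda>t. \<Sum>k<K. w k *
      ((\<Sum>c'\<in>{c'. \<nu> k (Inr c') \<noteq> 0}. \<nu> k (Inr c') * res (k, c') t) + \<nu> k (Inl t)))"
  proof (rule bigstep.succ[OF _ d])
    show "weight_scheduler W (h, c) = Some ?v" by (simp add: weight_scheduler_def)
    show "\<forall>k<K. \<forall>c'. \<nu> k (Inr c') \<noteq> 0 \<longrightarrow>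
        bigstep A B (weight_scheduler W) n (h @ [(c, \<nu> k)]) c' (res (k, c'))"
      using res by (metis fst_conv snd_conv)
  qed
  then show ?case by blast
qed

lemma non_blocking_weight_scheduler:
  "valid_weights W \<Longrightarrow> non_blocking A B (weight_scheduler W) c"
  unfolding non_blocking_def using bigstep_weight_scheduler_exists by blast

text \<open>The table that uses the row \<open>r\<close> at history \<open>p\<close> and follows \<open>Wc c'\<close> on every history
  extending \<open>c' # p\<close>; on all other histories it is an arbitrary valid table.\<close>

definition graft ::
  "('a, 'b, 's) conf list \<Rightarrow> (('a, 'b, 's) out \<Rightarrow> real) \<Rightarrow> (('a, 'b, 's) conf \<Rightarrow> ('a, 'b, 's) weights)
    \<Rightarrow> ('a, 'b, 's) weights" where
  "graft p r Wc = (\<lambda>(q, l).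
     if q = p then r l
     else if length p < length q \<and> drop (length q - length p) q = p
       then Wc (q ! (length q - Suc (length p))) (q, l)
     else Wc (hd q) (q, l))"

lemma graft_root: "graft p r Wc (p, l) = r l"
  by (simp add: graft_def)

lemma graft_extension: "graft p r Wc (zs @ c' # p, l) = Wc c' (zs @ c' # p, l)"
proof -
  let ?q = "zs @ c' # p"
  have "?q \<noteq> p" using arg_cong[of ?q p length] by auto
  moreover have "drop (length ?q - length p) ?q = p" by simp
  moreover have "?q ! (length ?q - Suc (length p)) = c'" by (simp add: nth_append)
  ultimately show ?thesis by (simp add: graft_def)
qed

lemma valid_weights_graft:
  assumes "valid_row (hd p) r" "\<And>c'. valid_weights (Wc c')"
  shows "valid_weights (graft p r Wc)"
  unfolding valid_weights_def
proof
  fix q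
  show "valid_row (hd q) (\<lambda>l. graft p r Wc (q, l))"
  proof (cases "q = p")
    case True
    then show ?thesis using assms(1) by (simp add: graft_root)
  next
    case False
    define c' where "c' = (if length p < length q \<and> drop (length q - length p) q = p
      then q ! (length q - Suc (length p)) else hd q)"
    have "(\<lambda>l. graft p r Wc (q, l)) = (\<lambda>l. Wc c' (q, l))"
      using False by (auto simp: graft_def c'_def)
    then show ?thesis using assms(2)[of c'] by (simp add: valid_weights_def)
  qed
qed

lemma outcome_graft:
  "outcome (Suc n) (graft p r Wc) p = after_step (hd p) (mix (hd p) r) (\<lambda>c'. outcome n (Wc c') (c' # p))"
proof -
  have "outcome n (graft p r Wc) (c' # p) = outcome n (Wc c') (c' # p)" for c'
    by (rule outcome_cong_suffix) (simp add: graft_extension)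
  then show ?thesis by (simp add: graft_root)
qed

lemma valid_row_convex:
  assumes "\<forall>i\<in>I. 0 \<le> a i" "sum a I = 1" "\<forall>i\<in>I. valid_row c (r i)"
  shows "valid_row c (\<lambda>l. \<Sum>i\<in>I. a i * r i l)"
  unfolding valid_row_def
proof (intro conjI allI impI)
  fix l show "0 \<le> (\<Sum>i\<in>I. a i * r i l)"
    using assms(1,3) by (auto intro!: sum_nonneg simp: valid_row_def)
next
  fix l assume "l \<notin> steps c"
  then show "(\<Sum>i\<in>I. a i * r i l) = 0" using assms(3) by (simp add: valid_row_def)
next
  have "(\<Sum>l\<in>steps c. \<Sum>i\<in>I. a i * r i l) = (\<Sum>i\<in>I. a i * (\<Sum>l\<in>steps c. r i l))"
    by (simp add: sum.swap[of _ I] sum_distrib_left)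
  also have "\<dots> = 1" using assms(2,3) by (simp add: valid_row_def)
  finally show "(\<Sum>l\<in>steps c. \<Sum>i\<in>I. a i * r i l) = 1" .
qed

lemma mix_convex: "mix c (\<lambda>l. \<Sum>i\<in>I. a i * r i l) x = (\<Sum>i\<in>I. a i * mix c (r i) x)"
proof -
  have "(\<Sum>l\<in>steps c. (\<Sum>i\<in>I. a i * r i l) * l x) = (\<Sum>l\<in>steps c. \<Sum>i\<in>I. a i * r i l * l x)"
    by (simp add: sum_distrib_right)
  also have "\<dots> = (\<Sum>i\<in>I. \<Sum>l\<in>steps c. a i * r i l * l x)"
    by (rule sum.swap)
  also have "\<dots> = (\<Sum>i\<in>I. a i * (\<Sum>l\<in>steps c. r i l * l x))"
    by (simp add: sum_distrib_left mult.assoc)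
  finally show ?thesis by (simp add: mix_def)
qed

lemma outcome_scaled_mixture:
  fixes Wf :: "'i \<Rightarrow> ('a, 'b, 's) weights"
  assumes "finite I" "\<forall>i\<in>I. 0 \<le> u i"
    and mixture: "\<And>b. (\<Sum>i\<in>I. u i) \<noteq> 0 \<Longrightarrow> \<forall>i\<in>I. 0 \<le> b i \<Longrightarrow> sum b I = 1 \<Longrightarrow>
      \<exists>W. valid_weights W \<and> outcome n W q = (\<lambda>t. \<Sum>i\<in>I. b i * outcome n (Wf i) q t)"
  shows "\<exists>W. valid_weights W \<and>
    (\<forall>t. (\<Sum>i\<in>I. u i) * outcome n W q t = (\<Sum>i\<in>I. u i * outcome n (Wf i) q t))"
proof (cases "(\<Sum>i\<in>I. u i) = 0")
  case True
  then have "\<forall>i\<in>I. u i = 0" using sum_nonneg_eq_0_iff[OF assms(1), of u] assms(2) by simp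
  then show ?thesis using True ex_valid_weights by simp
next
  case False
  then have pos: "0 < (\<Sum>i\<in>I. u i)" using assms(2) by (simp add: less_le sum_nonneg)
  define b where "b i = u i / (\<Sum>i\<in>I. u i)" for i
  have "\<forall>i\<in>I. 0 \<le> b i" using assms(2) pos by (simp add: b_def)
  moreover have "sum b I = 1" using pos by (simp add: b_def sum_divide_distrib[symmetric])
  ultimately obtain W where "valid_weights W"
    and "outcome n W q = (\<lambda>t. \<Sum>i\<in>I. b i * outcome n (Wf i) q t)"
    using mixture False by blast
  moreover have "(\<Sum>i\<in>I. u i) * (\<Sum>i\<in>I. b i * outcome n (Wf i) q t)
      = (\<Sum>i\<in>I. u i * outcome n (Wf i) q t)" for t
    using False by (simp add: b_def sum_distrib_left)
  ultimately show ?thesis by auto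
qed

lemma outcome_graft_mixture:
  fixes Wf :: "'i \<Rightarrow> ('a, 'b, 's) weights"
  assumes "finite I"
    and "\<And>c' t. mix (hd p) (\<lambda>l. \<Sum>i\<in>I. a i * Wf i (p, l)) (Inr c') * outcome n (Wc c') (c' # p) t
      = (\<Sum>i\<in>I. a i * mix (hd p) (\<lambda>l. Wf i (p, l)) (Inr c') * outcome n (Wf i) (c' # p) t)"
  shows "outcome (Suc n) (graft p (\<lambda>l. \<Sum>i\<in>I. a i * Wf i (p, l)) Wc) p t
    = (\<Sum>i\<in>I. a i * outcome (Suc n) (Wf i) p t)"
proof -
  let ?r = "\<lambda>l. \<Sum>i\<in>I. a i * Wf i (p, l)"
  have "outcome (Suc n) (graft p ?r Wc) p t
      = after_step (hd p) (mix (hd p) ?r) (\<lambda>c'. outcome n (Wc c') (c' # p)) t"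
    by (simp only: outcome_graft)
  also have "\<dots> = (\<Sum>i\<in>I. a i * after_step (hd p) (mix (hd p) (\<lambda>l. Wf i (p, l)))
      (\<lambda>c'. outcome n (Wf i) (c' # p)) t)"
    using assms(1) mix_convex assms(2)
    by (rule after_step_combine[where Fi = "\<lambda>i c'. outcome n (Wf i) (c' # p)"])
  also have "\<dots> = (\<Sum>i\<in>I. a i * outcome (Suc n) (Wf i) p t)"
    by simp
  finally show ?thesis .
qed

lemma outcome_convex_Suc:
  fixes Wf :: "'i \<Rightarrow> ('a, 'b, 's) weights"
  assumes fin: "finite I" and wf: "wf_conf (hd p)"
    and a: "\<forall>i\<in>I. 0 \<le> a i" "sum a I = 1" and Wf: "\<forall>i\<in>I. valid_weights (Wf i)"
    and IH: "\<And>c' b. wf_conf c' \<Longrightarrow> \<forall>i\<in>I. 0 \<le> b i \<Longrightarrow> sum b I = 1 \<Longrightarrow>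
      \<exists>W. valid_weights W \<and> outcome n W (c' # p) = (\<lambda>t. \<Sum>i\<in>I. b i * outcome n (Wf i) (c' # p) t)"
  shows "\<exists>W. valid_weights W \<and> outcome (Suc n) W p = (\<lambda>t. \<Sum>i\<in>I. a i * outcome (Suc n) (Wf i) p t)"
proof -
  define c where "c = hd p"
  define U where "U i = mix c (\<lambda>l. Wf i (p, l))" for i
  define r where "r = (\<lambda>l. \<Sum>i\<in>I. a i * Wf i (p, l))"
  have rows: "valid_row c (\<lambda>l. Wf i (p, l))" if "i \<in> I" for i
    using Wf that by (simp add: valid_weights_def c_def)
  have r: "valid_row c r"
    unfolding r_def using a rows by (intro valid_row_convex[where r = "\<lambda>i l. Wf i (p, l)"]) auto
  have V: "mix c r x = (\<Sum>i\<in>I. a i * U i x)" for x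
    unfolding r_def U_def by (rule mix_convex)
  have U_wf: "wf_out (U i)" if "i \<in> I" for i
    unfolding U_def using wf rows[OF that] by (intro wf_out_mix) (simp_all add: c_def valid_row_def)
  have terms_nonneg: "0 \<le> a i * U i x" if "i \<in> I" for i x
  proof (rule mult_nonneg_nonneg)
    show "0 \<le> a i" using a(1) that by blast
    show "0 \<le> U i x" using U_wf[OF that] unfolding wf_out_def by blast
  qed
  txt \<open>Table \<open>i\<close> reaches the successor \<open>c'\<close> with weight \<open>a i * U i (Inr c')\<close>; below \<open>c'\<close>
    the induction hypothesis realises the renormalised mixture.\<close>
  have mix_wf: "wf_out (mix c r)"
    using wf r by (intro wf_out_mix) (simp_all add: c_def valid_row_def)
  have "\<exists>W'. valid_weights W' \<and> (\<forall>t. mix c r (Inr c') * outcome n W' (c' # p) t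
      = (\<Sum>i\<in>I. a i * U i (Inr c') * outcome n (Wf i) (c' # p) t))" for c'
    unfolding V
  proof (rule outcome_scaled_mixture[OF fin])
    show "\<forall>i\<in>I. 0 \<le> a i * U i (Inr c')" using terms_nonneg by blast
    fix b :: "'i \<Rightarrow> real"
    assume "(\<Sum>i\<in>I. a i * U i (Inr c')) \<noteq> 0" and b: "\<forall>i\<in>I. 0 \<le> b i" "sum b I = 1"
    then have "mix c r (Inr c') \<noteq> 0" by (simp add: V)
    then have "wf_conf c'" by (rule wf_out_successor[OF mix_wf])
    then show "\<exists>W. valid_weights W \<and> outcome n W (c' # p) = (\<lambda>t. \<Sum>i\<in>I. b i * outcome n (Wf i) (c' # p) t)"
      using IH b by blast
  qed
  then have "\<forall>c'. \<exists>W'. valid_weights W' \<and> (\<forall>t. mix c r (Inr c') * outcome n W' (c' # p) t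
      = (\<Sum>i\<in>I. a i * U i (Inr c') * outcome n (Wf i) (c' # p) t))" by blast
  from choice[OF this] obtain Wc where Wc: "\<And>c'. valid_weights (Wc c')"
    and Wc_outcome: "\<And>c' t. mix c r (Inr c') * outcome n (Wc c') (c' # p) t
      = (\<Sum>i\<in>I. a i * U i (Inr c') * outcome n (Wf i) (c' # p) t)" by blast
  have "outcome (Suc n) (graft p r Wc) p t = (\<Sum>i\<in>I. a i * outcome (Suc n) (Wf i) p t)" for t
    using fin Wc_outcome unfolding U_def c_def r_def by (rule outcome_graft_mixture)
  moreover have "valid_weights (graft p r Wc)"
    using r Wc by (intro valid_weights_graft) (simp_all add: c_def)
  ultimately show ?thesis by blast
qed

lemma outcome_convex:
  fixes Wf :: "'i \<Rightarrow> ('a, 'b, 's) weights"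
  assumes "finite I"
  shows "wf_conf (hd p) \<Longrightarrow> \<forall>i\<in>I. 0 \<le> a i \<Longrightarrow> sum a I = 1 \<Longrightarrow> \<forall>i\<in>I. valid_weights (Wf i) \<Longrightarrow>
    \<exists>W. valid_weights W \<and> outcome n W p = (\<lambda>t. \<Sum>i\<in>I. a i * outcome n (Wf i) p t)"
proof (induction n arbitrary: p a)
  case 0
  then show ?case using ex_valid_weights by auto
next
  case (Suc n)
  show ?case
  proof (rule outcome_convex_Suc[OF assms Suc.prems])
    fix c' :: "('a, 'b, 's) conf" and b :: "'i \<Rightarrow> real"
    assume "wf_conf c'" "\<forall>i\<in>I. 0 \<le> b i" "sum b I = 1"
    then show "\<exists>W. valid_weights W \<and> outcome n W (c' # p) = (\<lambda>t. \<Sum>i\<in>I. b i * outcome n (Wf i) (c' # p) t)"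
      using Suc.IH[of "c' # p" b] Suc.prems(4) by simp
  qed
qed

lemma bigstep_is_outcome:
  "bigstep A B Sc n h c \<mu> \<Longrightarrow> wf_conf c \<Longrightarrow> \<exists>W. valid_weights W \<and> outcome n W (c # p) = \<mu>"
proof (induction arbitrary: p rule: bigstep.induct)
  case (zero h c)
  then show ?case using ex_valid_weights by auto
next
  case (succ h c v K w \<nu> n m)
  have w: "\<forall>k\<in>{..<K}. 0 \<le> w k" "sum w {..<K} = 1" and \<nu>: "\<And>k. k < K \<Longrightarrow> \<nu> k \<in> steps c"
    using succ.hyps(2) by (auto simp: convex_decomp_def steps_def)
  have "\<exists>W. valid_weights W \<and> (k < K \<and> \<nu> k (Inr c') \<noteq> 0 \<longrightarrow> outcome n W (c' # c # p) = m k c')"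
    for k c'
  proof (cases "k < K \<and> \<nu> k (Inr c') \<noteq> 0")
    case True
    then have "wf_conf c'"
      using step_wf_out[of c "\<nu> k"] \<nu> succ.prems by (auto simp: steps_def intro: wf_out_successor)
    then show ?thesis using succ.IH True by blast
  qed (use ex_valid_weights in auto)
  then have "\<forall>kc. \<exists>W. valid_weights W \<and>
      (fst kc < K \<and> \<nu> (fst kc) (Inr (snd kc)) \<noteq> 0 \<longrightarrow> outcome n W (snd kc # c # p) = m (fst kc) (snd kc))"
    by blast
  from choice[OF this] obtain Wk where Wk: "\<And>k c'. valid_weights (Wk (k, c'))"
    and Wk_outcome: "\<And>k c'. k < K \<Longrightarrow> \<nu> k (Inr c') \<noteq> 0 \<Longrightarrow> outcome n (Wk (k, c')) (c' # c # p) = m k c'"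
    by (metis fst_conv snd_conv)
  define Wg where "Wg k = graft (c # p) (\<lambda>l. if l = \<nu> k then 1 else 0) (\<lambda>c'. Wk (k, c'))" for k
  have "valid_weights (Wg k)" if "k < K" for k
    unfolding Wg_def using valid_row_point[OF \<nu>[OF that]] Wk by (intro valid_weights_graft) simp_all
  moreover have "outcome (Suc n) (Wg k) (c # p) t
      = (\<Sum>c'\<in>{c'. \<nu> k (Inr c') \<noteq> 0}. \<nu> k (Inr c') * m k c' t) + \<nu> k (Inl t)" if "k < K" for k t
  proof -
    have "outcome (Suc n) (Wg k) (c # p) t = after_step c (\<nu> k) (\<lambda>c'. outcome n (Wk (k, c')) (c' # c # p)) t"
      unfolding Wg_def outcome_graft using mix_point[OF \<nu>[OF that]] by simp
    also have "\<dots> = (\<Sum>c'\<in>{c'. \<nu> k (Inr c') \<noteq> 0}. \<nu> k (Inr c') * m k c' t) + \<nu> k (Inl t)"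
      using Wk_outcome that by (intro after_step_eq_support_sum[symmetric] \<nu>) auto
    finally show ?thesis .
  qed
  ultimately show ?case
    using outcome_convex[of "{..<K}" "c # p" w Wg "Suc n"] succ.prems w by auto
qed

lemma models_box_outcome:
  assumes "models_box A B c \<phi>" "valid_weights W"
  shows "\<exists>n. val_of (outcome n W [c]) \<in> \<phi>"
proof -
  obtain n \<mu> where "bigstep A B (weight_scheduler W) n [] c \<mu>" "val_of \<mu> \<in> \<phi>"
    using assms is_scheduler_weight_scheduler non_blocking_weight_scheduler
    unfolding models_box_def by blast
  then show ?thesis using bigstep_weight_scheduler_eq_outcome by fastforce
qed

lemma uniform_horizon:
  assumes "vformula_den \<phi>" "wf_conf c" "\<And>W. valid_weights W \<Longrightarrow> \<exists>n. val_of (outcome n W [c]) \<in> \<phi>"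
  shows "\<exists>z. \<forall>m\<ge>z. \<forall>W. valid_weights W \<longrightarrow> val_of (outcome m W [c]) \<in> \<phi>"
proof -
  let ?U = "\<lambda>n. {W. val_of (outcome n W [c]) \<in> \<phi>}"
  have "open (?U n)" for n
  proof (rule open_vformula_den_preimage[OF assms(1) finite_outcome_support[of n "[c]"]])
    show "outcome n W [c] t = 0" if "t \<notin> outcome_support n [c]" for W t
      using outcome_support that by blast
  qed (rule continuous_outcome)
  moreover have "{W. valid_weights W} \<subseteq> (\<Union>n. ?U n)" using assms(3) by blast
  moreover have "W \<in> ?U m" if "W \<in> {W. valid_weights W}" "n \<le> m" "W \<in> ?U n" for W n m
  proof (simp, rule vformula_den_mono[OF assms(1)])
    show "\<forall>t. 0 \<le> outcome n W [c] t" "\<forall>t. outcome n W [c] t \<le> outcome m W [c] t"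
      using outcome_nonneg_le_Suc outcome_mono that(1,2) assms(2) by simp_all
    show "finite (supp (outcome m W [c]))"
      by (rule finite_subset[OF _ finite_outcome_support[of m "[c]"]]) (auto simp: supp_def outcome_support)
    show "val_of (outcome n W [c]) \<in> \<phi>" using that(3) by simp
  qed
  ultimately obtain z where "\<forall>m\<ge>z. {W. valid_weights W} \<subseteq> ?U m"
    using compact_increasing_cover[OF compact_valid_weights] by meson
  then show ?thesis by auto
qed

end

theorem mainTheorem6:
  fixes A :: "'a \<Rightarrow> 's \<Rightarrow> 's dist" and B :: "'b \<Rightarrow> 's \<Rightarrow> bool"
    and P :: "('a, 'b) prog" and s :: 's and \<phi> :: "('s set \<Rightarrow> ennreal) set"
  assumes "\<forall>a t. is_pdist (A a t)"
    and "wf_prog P"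
    and "vformula_den \<phi>"
    and "models_box A B (P, s) \<phi>"
  shows "\<exists>z::nat. z > 0 \<and>
           (\<forall>Sc. is_scheduler A B Sc \<and> non_blocking A B Sc (P, s) \<longrightarrow>
              (\<exists>\<mu>. bigstep A B Sc z [] (P, s) \<mu> \<and> val_of \<mu> \<in> \<phi>))"
proof -
  interpret prob_atoms A B by unfold_locales (rule assms(1))
  have wf: "wf_conf (P, s)" using assms(2) by (simp add: wf_conf_def)
  obtain z where z: "\<And>m W. z \<le> m \<Longrightarrow> valid_weights W \<Longrightarrow> val_of (outcome m W [(P, s)]) \<in> \<phi>"
    using uniform_horizon[OF assms(3) wf models_box_outcome[OF assms(4)]] by blast
  show ?thesis
  proof (intro exI[of _ "Suc z"] conjI allI impI)
    fix Sc assume "is_scheduler A B Sc \<and> non_blocking A B Sc (P, s)"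
    then obtain \<mu> where \<mu>: "bigstep A B Sc (Suc z) [] (P, s) \<mu>" by (auto simp: non_blocking_def)
    obtain W where W: "valid_weights W" and outcome: "outcome (Suc z) W [(P, s)] = \<mu>"
      using bigstep_is_outcome[OF \<mu> wf, of "[]"] by blast
    have "val_of \<mu> \<in> \<phi>" unfolding outcome[symmetric] by (rule z) (simp_all add: W)
    then show "\<exists>\<mu>. bigstep A B Sc (Suc z) [] (P, s) \<mu> \<and> val_of \<mu> \<in> \<phi>" using \<mu> by blast
  qed simp
qed

end
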